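(* Let $n=2K$, let $m_1,\dots,m_n>0$ be fixed constants, and let $M=\{(x_1,\dots,x_n)\in\mathbb{R}^n: x_1<\dots<x_n\}$ carry the Poisson bracket determined by $\{x_i,x_k\}=\operatorname{sgn}(x_i-x_k)$, i.e. $\{f,g\}=\sum_{i,k}\operatorname{sgn}(x_i-x_k)\frac{\partial f}{\partial x_i}\frac{\partial g}{\partial x_k}$. Set $h_i=m_ie^{x_i}$, $g_i=m_ie^{-x_i}$ and $$H_j=\sum_{\substack{I,J\in\binom{[2K]}{j}\\ I<J}} h_I g_J,\qquad 1\le j\le K.$$ Then $\{H_i,H_j\}=0$ for all $1\le i,j\le K$.
   Context: $[k]=\{1,\dots,k\}$ and $\binom{[k]}{j}$ is the set of $j$-element subsets $I=\{i_1<\dots<i_j\}$ of $[k]$. For $I,J\in\binom{[k]}{j}$, $I<J$ (interlacing) means $i_1<j_1<i_2<j_2<\dots<i_j<j_j$. Also $h_I=h_{i_1}\cdots h_{i_j}$ and $g_J=g_{j_1}\cdots g_{j_j}$. (These $H_j$ are constants of motion of the conservative mCH peakon system $\dot x_j=2\sum_{k\ne j}m_jm_ke^{-|x_j-x_k|}+4\sum_{1\le i<j<k\le n}m_im_ke^{-|x_i-x_k|}$ on $M$.) *)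

theory Defs
  imports "HOL-Analysis.Analysis"
begin

text \<open>Points of R^n are functions x :: nat => real, of which only the
coordinates x 1, ..., x n matter.\<close>

definition partial :: "((nat \<Rightarrow> real) \<Rightarrow> real) \<Rightarrow> nat \<Rightarrow> (nat \<Rightarrow> real) \<Rightarrow> real" where
  "partial f i x = deriv (\<lambda>t. f (x(i := t))) (x i)"

definition pbracket :: "nat \<Rightarrow> ((nat \<Rightarrow> real) \<Rightarrow> real) \<Rightarrow> ((nat \<Rightarrow> real) \<Rightarrow> real)
    \<Rightarrow> (nat \<Rightarrow> real) \<Rightarrow> real" where
  "pbracket n f g x = (\<Sum>i\<in>{1..n}. \<Sum>k\<in>{1..n}.
      sgn (x i - x k) * partial f i x * partial g k x)"

definition subsets_of :: "nat \<Rightarrow> nat \<Rightarrow> nat set set" where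
  "subsets_of k j = {I. I \<subseteq> {1..k} \<and> card I = j}"

definition interlace :: "nat set \<Rightarrow> nat set \<Rightarrow> bool" where
  "interlace I J = (let a = sorted_list_of_set I; b = sorted_list_of_set J; j = card I in
      card J = j \<and> (\<forall>r<j. a ! r < b ! r) \<and> (\<forall>r. r + 1 < j \<longrightarrow> b ! r < a ! (r + 1)))"

definition H :: "nat \<Rightarrow> (nat \<Rightarrow> real) \<Rightarrow> nat \<Rightarrow> (nat \<Rightarrow> real) \<Rightarrow> real" where
  "H K m j x = (\<Sum>(I, J) \<in> {(I, J). I \<in> subsets_of (2 * K) j \<and> J \<in> subsets_of (2 * K) j
        \<and> interlace I J}.
      (\<Prod>i\<in>I. m i * exp (x i)) * (\<Prod>l\<in>J. m l * exp (- x l)))"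

end

theory Submission
  imports Defs
begin

text \<open>With v = 1_I - 1_J, the monomial h_I g_J is a constant times exp (\<Sum>b. v_b x_b), and
  (I, J) is an interlacing pair exactly when v has entries in {-1, 0, 1}, partial sums in
  {0, 1} and total sum 0. Since {x_a, x_k} = sgn (a - k) on the ordered chamber, the bracket
  of two such exponentials is their product times the integer
  \<sigma>(v, u) = \<Sum>a k. sgn (a - k) v_a u_k. Up to telescoping terms, 2 \<sigma>(v, u) splits into
  contributions of the maximal blocks of indices on which the partial sums of v and u
  differ, and exchanging v and u on one block preserves the product of the weights and
  the number of ones of each vector while reversing that block's contribution. So in
  {H_i, H_j} all contributions cancel.\<close>

section \<open>Interlacing and counting functions\<close>

definition count_le :: "nat set \<Rightarrow> nat \<Rightarrow> nat" where
  "count_le I a = card {x\<in>I. x \<le> a}"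

lemma in_sorted_list_of_set_conv_nth:
  "finite I \<Longrightarrow> y \<in> I \<longleftrightarrow> (\<exists>r<card I. sorted_list_of_set I ! r = y)"
  by (metis in_set_conv_nth length_sorted_list_of_set set_sorted_list_of_set)

lemma sorted_list_of_set_nth_mem: "finite I \<Longrightarrow> r < card I \<Longrightarrow> sorted_list_of_set I ! r \<in> I"
  using in_sorted_list_of_set_conv_nth by blast

lemma sorted_list_of_set_nth_le_iff:
  assumes "finite I" "r < card I"
  shows "sorted_list_of_set I ! r \<le> a \<longleftrightarrow> r < count_le I a"
proof -
  let ?A = "sorted_list_of_set I"
  let ?R = "{r. r < card I \<and> ?A ! r \<le> a}"
  have mono: "?A ! r \<le> ?A ! s" if "r \<le> s" "s < card I" for r s
    using that by (simp add: sorted_nth_mono)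
  have "{x\<in>I. x \<le> a} = (!) ?A ` ?R"
  proof
    show "{x\<in>I. x \<le> a} \<subseteq> (!) ?A ` ?R"
    proof
      fix x assume "x \<in> {x\<in>I. x \<le> a}"
      then obtain r where "r < card I" "?A ! r = x" "x \<le> a"
        using in_sorted_list_of_set_conv_nth[OF assms(1)] by auto
      then show "x \<in> (!) ?A ` ?R" by force
    qed
    show "(!) ?A ` ?R \<subseteq> {x\<in>I. x \<le> a}"
      using sorted_list_of_set_nth_mem[OF assms(1)] by auto
  qed
  moreover have "inj_on ((!) ?A) ?R"
    by (auto simp: inj_on_def nth_eq_iff_index_eq)
  ultimately have count: "count_le I a = card ?R"
    unfolding count_le_def by (simp add: card_image)
  show ?thesis
  proof
    assume "?A ! r \<le> a"
    then have "{..r} \<subseteq> ?R" using assms(2) mono by fastforce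
    then have "card {..r} \<le> card ?R" by (intro card_mono) auto
    then show "r < count_le I a" using count by simp
  next
    assume "r < count_le I a"
    show "?A ! r \<le> a"
    proof (rule ccontr)
      assume "\<not> ?A ! r \<le> a"
      then have "?R \<subseteq> {..<r}"
        using mono[of r] by (metis (no_types, lifting) lessThan_iff mem_Collect_eq not_le_imp_less
            order_trans subsetI)
      then have "card ?R \<le> r" using card_mono[of "{..<r}" ?R] by simp
      then show False using \<open>r < count_le I a\<close> count by simp
    qed
  qed
qed

lemma count_le_le_card: "finite I \<Longrightarrow> count_le I a \<le> card I"
  unfolding count_le_def by (intro card_mono) auto

lemma interlace_iff_nth:
  "interlace I J \<longleftrightarrow> card J = card I
    \<and> (\<forall>r<card I. sorted_list_of_set I ! r < sorted_list_of_set J ! r)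
    \<and> (\<forall>r. r + 1 < card I \<longrightarrow> sorted_list_of_set J ! r < sorted_list_of_set I ! (r + 1))"
  unfolding interlace_def Let_def ..

text \<open>Scanning from the left, the elements of interlacing I and J alternate, starting with
  one of I; so at every point I is ahead of J by 0 or 1 elements.\<close>
lemma interlace_imp_count_le:
  assumes fI: "finite I" and fJ: "finite J" and "interlace I J"
  shows "count_le J a \<le> count_le I a" and "count_le I a \<le> count_le J a + 1"
proof -
  let ?A = "sorted_list_of_set I" and ?B = "sorted_list_of_set J"
  have card: "card J = card I" and lt1: "\<And>r. r < card I \<Longrightarrow> ?A ! r < ?B ! r"
    and lt2: "\<And>r. r + 1 < card I \<Longrightarrow> ?B ! r < ?A ! (r + 1)"
    using \<open>interlace I J\<close> interlace_iff_nth by auto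
  note nth_le_A = sorted_list_of_set_nth_le_iff[OF fI]
  note nth_le_B = sorted_list_of_set_nth_le_iff[OF fJ]
  show "count_le J a \<le> count_le I a"
  proof (rule ccontr)
    let ?p = "count_le I a"
    assume "\<not> count_le J a \<le> ?p"
    moreover have "count_le J a \<le> card I" using count_le_le_card[OF fJ] card by simp
    ultimately have "?p < card I" "?B ! ?p \<le> a" using nth_le_B[of ?p a] card by auto
    then show False using lt1[of ?p] nth_le_A[of ?p a] by simp
  qed
  show "count_le I a \<le> count_le J a + 1"
  proof (rule ccontr)
    let ?q = "count_le J a"
    assume "\<not> count_le I a \<le> ?q + 1"
    then have "?q + 1 < card I" "?A ! (?q + 1) \<le> a"
      using count_le_le_card[OF fI, of a] nth_le_A[of "?q + 1" a] by auto
    then show False using lt2[of ?q] nth_le_B[of ?q a] card by simp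
  qed
qed

lemma interlace_imp_disjoint:
  assumes fI: "finite I" and fJ: "finite J" and "interlace I J"
  shows "I \<inter> J = {}"
proof (rule ccontr)
  let ?A = "sorted_list_of_set I" and ?B = "sorted_list_of_set J"
  have card: "card J = card I" and lt1: "\<And>r. r < card I \<Longrightarrow> ?A ! r < ?B ! r"
    and lt2: "\<And>r. r + 1 < card I \<Longrightarrow> ?B ! r < ?A ! (r + 1)"
    using \<open>interlace I J\<close> interlace_iff_nth by auto
  assume "I \<inter> J \<noteq> {}"
  then obtain y where "y \<in> I" "y \<in> J" by blast
  then obtain r s where r: "r < card I" "?A ! r = ?B ! s" and s: "s < card I"
    using in_sorted_list_of_set_conv_nth fI fJ card by metis
  show False
  proof (cases "r \<le> s")
    case True
    then have "?B ! r \<le> ?B ! s" using s card by (simp add: sorted_nth_mono)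
    then show False using lt1[OF r(1)] r by simp
  next
    case False
    then have "?A ! (s + 1) \<le> ?A ! r"
      using r by (intro sorted_nth_mono) auto
    then show False using lt2[of s] False r by simp
  qed
qed

lemma count_le_imp_interlace:
  assumes fI: "finite I" and fJ: "finite J" and card: "card J = card I" and disj: "I \<inter> J = {}"
    and count: "\<And>a. count_le J a \<le> count_le I a \<and> count_le I a \<le> count_le J a + 1"
  shows "interlace I J"
proof -
  let ?A = "sorted_list_of_set I" and ?B = "sorted_list_of_set J"
  note nth_le_A = sorted_list_of_set_nth_le_iff[OF fI]
  note nth_le_B = sorted_list_of_set_nth_le_iff[OF fJ]
  note memA = sorted_list_of_set_nth_mem[OF fI]
  have memB: "r < card I \<Longrightarrow> ?B ! r \<in> J" for r
    using sorted_list_of_set_nth_mem[OF fJ] card by simp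
  have lt1: "?A ! r < ?B ! r" if "r < card I" for r
  proof -
    have "r < count_le J (?B ! r)" using nth_le_B[of r "?B ! r"] that card by simp
    then have "?A ! r \<le> ?B ! r" using count nth_le_A[OF that] by (meson order.strict_trans2)
    moreover have "?A ! r \<noteq> ?B ! r" using memA memB that disj by force
    ultimately show ?thesis by simp
  qed
  have lt2: "?B ! r < ?A ! (r + 1)" if "r + 1 < card I" for r
  proof -
    have "r + 1 < count_le I (?A ! (r + 1))" using nth_le_A[OF that] by blast
    moreover have "count_le I (?A ! (r + 1)) \<le> count_le J (?A ! (r + 1)) + 1" using count by blast
    ultimately have "r < count_le J (?A ! (r + 1))" by linarith
    then have "?B ! r \<le> ?A ! (r + 1)" using nth_le_B[of r] that card by simp
    moreover have "?A ! (r + 1) \<noteq> ?B ! r" using memA memB that disj by force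
    ultimately show ?thesis by simp
  qed
  show "interlace I J" unfolding interlace_iff_nth using card lt1 lt2 by blast
qed

section \<open>Alternating vectors\<close>

definition psum :: "(nat \<Rightarrow> int) \<Rightarrow> nat \<Rightarrow> int" where
  "psum v a = (\<Sum>b\<le>a. v b)"

lemma psum_0: "psum v 0 = v 0"
  unfolding psum_def by simp

lemma psum_Suc: "psum v (Suc a) = psum v a + v (Suc a)"
  unfolding psum_def by simp

lemma psum_diff: "1 \<le> b \<Longrightarrow> v b = psum v b - psum v (b - 1)"
  using psum_Suc[of v "b - 1"] by simp

definition alternating :: "nat \<Rightarrow> nat \<Rightarrow> (nat \<Rightarrow> int) set" where
  "alternating n j = {v. (\<forall>b. v b \<noteq> 0 \<longrightarrow> 1 \<le> b \<and> b \<le> n) \<and> (\<forall>a. psum v a \<in> {0, 1})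
      \<and> psum v n = 0 \<and> card {b\<in>{1..n}. v b = 1} = j}"

lemma alternatingD:
  assumes "v \<in> alternating n j"
  shows alternating_support: "v b \<noteq> 0 \<Longrightarrow> 1 \<le> b \<and> b \<le> n"
    and alternating_psum: "psum v a \<in> {0, 1}"
    and alternating_psum_last: "psum v n = 0"
    and alternating_card: "card {b\<in>{1..n}. v b = 1} = j"
  using assms unfolding alternating_def by auto

lemma alternating_values:
  assumes "v \<in> alternating n j" shows "v b \<in> {-1, 0, 1}"
proof (cases b)
  case 0
  then show ?thesis using alternating_support[OF assms, of b] by auto
next
  case (Suc b')
  have "v b = psum v (Suc b') - psum v b'" using Suc psum_Suc[of v b'] by simp
  then show ?thesis using alternating_psum[OF assms, of b'] alternating_psum[OF assms, of "Suc b'"]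
    by auto
qed

definition signed_indicator :: "nat set \<Rightarrow> nat set \<Rightarrow> nat \<Rightarrow> int" where
  "signed_indicator I J b = (if b \<in> I then 1 else 0) - (if b \<in> J then 1 else 0)"

lemma psum_signed_indicator:
  assumes "finite I" "finite J"
  shows "psum (signed_indicator I J) a = int (count_le I a) - int (count_le J a)"
proof -
  have indicator: "(\<Sum>b\<le>a. if b \<in> S then 1 else 0 :: int) = int (count_le S a)" for S
  proof -
    have "{b\<in>{..a}. b \<in> S} = {x\<in>S. x \<le> a}" by auto
    then show ?thesis
      unfolding count_le_def using sum.inter_filter[of "{..a}" "\<lambda>_. 1::int" "\<lambda>b. b \<in> S"] by simp
  qed
  show ?thesis unfolding psum_def signed_indicator_def by (simp add: sum_subtractf indicator)
qed

lemma count_le_eq_card: "I \<subseteq> {1..n} \<Longrightarrow> n \<le> a \<Longrightarrow> count_le I a = card I"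
  unfolding count_le_def by (rule arg_cong[where f = card]) auto

definition interlaced_pairs :: "nat \<Rightarrow> nat \<Rightarrow> (nat set \<times> nat set) set" where
  "interlaced_pairs n j =
    {(I, J). I \<in> subsets_of n j \<and> J \<in> subsets_of n j \<and> interlace I J}"

lemma interlaced_pairsD:
  assumes "(I, J) \<in> interlaced_pairs n j"
  shows "I \<subseteq> {1..n}" "J \<subseteq> {1..n}" "card I = j" "card J = j" "I \<inter> J = {}"
proof -
  show I: "I \<subseteq> {1..n}" and J: "J \<subseteq> {1..n}" "card I = j" "card J = j"
    using assms unfolding interlaced_pairs_def subsets_of_def by auto
  have "finite I" "finite J" using I J by (auto intro: finite_subset)
  moreover have "interlace I J" using assms unfolding interlaced_pairs_def by simp
  ultimately show "I \<inter> J = {}" by (rule interlace_imp_disjoint)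
qed

lemma signed_indicator_mem_alternating:
  assumes "(I, J) \<in> interlaced_pairs n j"
  shows "signed_indicator I J \<in> alternating n j"
proof -
  note IJ = interlaced_pairsD[OF assms]
  have fin: "finite I" "finite J" using IJ(1,2) by (auto intro: finite_subset)
  have "interlace I J" using assms unfolding interlaced_pairs_def by simp
  then have "psum (signed_indicator I J) a \<in> {0, 1}" for a
  proof -
    have "count_le J a \<le> count_le I a" "count_le I a \<le> count_le J a + 1"
      using interlace_imp_count_le[OF fin \<open>interlace I J\<close>] by auto
    then show ?thesis using psum_signed_indicator[OF fin, of a] by auto
  qed
  moreover have "psum (signed_indicator I J) n = 0"
    using psum_signed_indicator[OF fin] count_le_eq_card IJ by simp
  moreover have "{b\<in>{1..n}. signed_indicator I J b = 1} = I"
    using IJ unfolding signed_indicator_def by auto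
  ultimately show ?thesis
    using IJ unfolding alternating_def signed_indicator_def by auto
qed

lemma alternating_eq_signed_indicator:
  assumes v: "v \<in> alternating n j"
  defines "I \<equiv> {b\<in>{1..n}. v b = 1}" and "J \<equiv> {b\<in>{1..n}. v b = -1}"
  shows "(I, J) \<in> interlaced_pairs n j" and "v = signed_indicator I J"
proof -
  have sub: "I \<subseteq> {1..n}" "J \<subseteq> {1..n}" unfolding I_def J_def by auto
  then have fin: "finite I" "finite J" by (auto intro: finite_subset)
  show v_eq: "v = signed_indicator I J"
  proof
    fix b
    show "v b = signed_indicator I J b"
      using alternating_values[OF v, of b] alternating_support[OF v, of b]
      unfolding signed_indicator_def I_def J_def by auto
  qed
  have card_I: "card I = j" using alternating_card[OF v] unfolding I_def .
  have card_J: "card J = card I"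
    using alternating_psum_last[OF v] psum_signed_indicator[OF fin, of n] count_le_eq_card sub
    by (simp add: v_eq[symmetric])
  have "count_le J a \<le> count_le I a \<and> count_le I a \<le> count_le J a + 1" for a
    using alternating_psum[OF v, of a] psum_signed_indicator[OF fin, of a] by (auto simp: v_eq[symmetric])
  moreover have "I \<inter> J = {}" unfolding I_def J_def by auto
  ultimately have "interlace I J" using count_le_imp_interlace[OF fin card_J] by blast
  then show "(I, J) \<in> interlaced_pairs n j"
    unfolding interlaced_pairs_def subsets_of_def using sub card_I card_J by auto
qed

lemma bij_betw_signed_indicator:
  "bij_betw (\<lambda>(I, J). signed_indicator I J) (interlaced_pairs n j) (alternating n j)"
proof (rule bij_betw_imageI)
  show "inj_on (\<lambda>(I, J). signed_indicator I J) (interlaced_pairs n j)"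
  proof (rule inj_onI, clarify)
    fix I J I' J'
    assume IJ: "(I, J) \<in> interlaced_pairs n j" and IJ': "(I', J') \<in> interlaced_pairs n j"
      and eq: "signed_indicator I J = signed_indicator I' J'"
    have "I \<inter> J = {}" "I' \<inter> J' = {}"
      using interlaced_pairsD(5)[OF IJ] interlaced_pairsD(5)[OF IJ'] .
    then have "I = {b. signed_indicator I J b = 1} \<and> J = {b. signed_indicator I J b = -1}"
      "I' = {b. signed_indicator I' J' b = 1} \<and> J' = {b. signed_indicator I' J' b = -1}"
      unfolding signed_indicator_def by auto
    then show "I = I' \<and> J = J'" using eq by simp
  qed
  show "(\<lambda>(I, J). signed_indicator I J) ` interlaced_pairs n j = alternating n j"
  proof
    show "(\<lambda>(I, J). signed_indicator I J) ` interlaced_pairs n j \<subseteq> alternating n j"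
      using signed_indicator_mem_alternating by auto
    show "alternating n j \<subseteq> (\<lambda>(I, J). signed_indicator I J) ` interlaced_pairs n j"
    proof
      fix v assume "v \<in> alternating n j"
      with alternating_eq_signed_indicator
      show "v \<in> (\<lambda>(I, J). signed_indicator I J) ` interlaced_pairs n j"
        by (metis (no_types, lifting) case_prod_conv image_eqI)
    qed
  qed
qed

section \<open>The Hamiltonians as sums of exponentials\<close>

definition mass :: "nat \<Rightarrow> (nat \<Rightarrow> real) \<Rightarrow> (nat \<Rightarrow> int) \<Rightarrow> real" where
  "mass n m v = (\<Prod>b\<in>{1..n}. if v b = 0 then 1 else m b)"

definition exponent :: "nat \<Rightarrow> (nat \<Rightarrow> int) \<Rightarrow> (nat \<Rightarrow> real) \<Rightarrow> real" where
  "exponent n v x = (\<Sum>b\<in>{1..n}. of_int (v b) * x b)"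

definition weight :: "nat \<Rightarrow> (nat \<Rightarrow> real) \<Rightarrow> (nat \<Rightarrow> int) \<Rightarrow> (nat \<Rightarrow> real) \<Rightarrow> real" where
  "weight n m v x = mass n m v * exp (exponent n v x)"

lemma weight_signed_indicator:
  assumes sub: "I \<subseteq> {1..n}" "J \<subseteq> {1..n}" and disj: "I \<inter> J = {}"
  shows "(\<Prod>i\<in>I. m i * exp (x i)) * (\<Prod>l\<in>J. m l * exp (- x l)) = weight n m (signed_indicator I J) x"
proof -
  have fin: "finite I" "finite J" using sub by (auto intro: finite_subset)
  have restrict: "(\<Sum>b\<in>{1..n}. if b \<in> S then f b else 0) = sum f S"
    if "S \<subseteq> {1..n}" for S and f :: "nat \<Rightarrow> real"
    using that sum.inter_restrict[of "{1..n}" f S] by (simp add: Int_absorb1)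
  have "mass n m (signed_indicator I J) = (\<Prod>b\<in>{1..n}. if b \<in> I \<union> J then m b else 1)"
    unfolding mass_def signed_indicator_def using disj by (intro prod.cong) auto
  also have "\<dots> = prod m (I \<union> J)"
    using sub prod.inter_restrict[of "{1..n}" m "I \<union> J"] by (simp add: Int_absorb1)
  also have "\<dots> = prod m I * prod m J" using fin disj by (simp add: prod.union_disjoint)
  finally have mass: "mass n m (signed_indicator I J) = prod m I * prod m J" .
  have "exponent n (signed_indicator I J) x
      = (\<Sum>b\<in>{1..n}. (if b \<in> I then x b else 0) - (if b \<in> J then x b else 0))"
    unfolding exponent_def signed_indicator_def by (intro sum.cong) auto
  also have "\<dots> = sum x I - sum x J" using restrict sub by (simp add: sum_subtractf)
  finally have exponent: "exponent n (signed_indicator I J) x = sum x I - sum x J" .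
  have "(\<Prod>i\<in>I. m i * exp (x i)) = prod m I * exp (sum x I)"
    using fin by (simp add: prod.distrib exp_sum)
  moreover have "(\<Prod>l\<in>J. m l * exp (- x l)) = prod m J * exp (- sum x J)"
    using fin by (simp add: prod.distrib exp_sum sum_negf[symmetric])
  ultimately show ?thesis
    unfolding weight_def mass exponent by (simp add: exp_diff exp_minus field_simps)
qed

lemma H_eq_sum_weight: "H K m j x = (\<Sum>v\<in>alternating (2 * K) j. weight (2 * K) m v x)"
proof -
  have "H K m j x = (\<Sum>(I, J)\<in>interlaced_pairs (2 * K) j.
      (\<Prod>i\<in>I. m i * exp (x i)) * (\<Prod>l\<in>J. m l * exp (- x l)))"
    unfolding H_def interlaced_pairs_def ..
  also have "\<dots> = (\<Sum>(I, J)\<in>interlaced_pairs (2 * K) j. weight (2 * K) m (signed_indicator I J) x)"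
    using interlaced_pairsD weight_signed_indicator by (intro sum.cong) auto
  also have "\<dots> = (\<Sum>v\<in>alternating (2 * K) j. weight (2 * K) m v x)"
    using sum.reindex_bij_betw[OF bij_betw_signed_indicator, of "\<lambda>v. weight (2 * K) m v x"]
    by (simp add: case_prod_unfold)
  finally show ?thesis .
qed

lemma exponent_update:
  assumes "\<forall>b. v b \<noteq> 0 \<longrightarrow> 1 \<le> b \<and> b \<le> n"
  shows "exponent n v (x(a := t)) = exponent n v x + of_int (v a) * (t - x a)"
proof -
  have "exponent n v (x(a := t))
      = (\<Sum>b\<in>{1..n}. of_int (v b) * x b + (if b = a then of_int (v a) * (t - x a) else 0))"
    unfolding exponent_def by (intro sum.cong) (auto simp: algebra_simps)
  also have "\<dots> = exponent n v x + of_int (v a) * (t - x a)"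
    using assms unfolding exponent_def by (auto simp: sum.distrib)
  finally show ?thesis .
qed

lemma partial_H: "partial (H K m j) a x = (\<Sum>v\<in>alternating (2 * K) j. weight (2 * K) m v x * v a)"
proof -
  let ?n = "2 * K"
  have "H K m j (x(a := t))
      = (\<Sum>v\<in>alternating ?n j. mass ?n m v * exp (exponent ?n v x + of_int (v a) * (t - x a)))" for t
    unfolding H_eq_sum_weight weight_def
  proof (intro sum.cong refl)
    fix v assume "v \<in> alternating ?n j"
    then have "\<forall>b. v b \<noteq> 0 \<longrightarrow> 1 \<le> b \<and> b \<le> ?n" using alternating_support by blast
    then show "mass ?n m v * exp (exponent ?n v (x(a := t)))
        = mass ?n m v * exp (exponent ?n v x + of_int (v a) * (t - x a))"
      by (simp add: exponent_update)
  qed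
  moreover have "((\<lambda>t. \<Sum>v\<in>alternating ?n j. mass ?n m v * exp (exponent ?n v x + of_int (v a) * (t - x a)))
      has_field_derivative (\<Sum>v\<in>alternating ?n j. weight ?n m v x * v a)) (at (x a))"
    unfolding weight_def by (auto intro!: derivative_eq_intros sum.cong simp: mult_ac)
  ultimately show ?thesis unfolding partial_def by (simp add: DERIV_imp_deriv)
qed

section \<open>The bracket as a signed bilinear form\<close>

definition sign_form :: "nat \<Rightarrow> (nat \<Rightarrow> int) \<Rightarrow> (nat \<Rightarrow> int) \<Rightarrow> int" where
  "sign_form n v u = (\<Sum>a\<in>{1..n}. \<Sum>k\<in>{1..n}. sgn (int a - int k) * v a * u k)"

lemma sum_swap_nested:
  "(\<Sum>a\<in>A. \<Sum>k\<in>B. \<Sum>v\<in>C. \<Sum>u\<in>D. f a k v u)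
    = (\<Sum>v\<in>C. \<Sum>u\<in>D. \<Sum>a\<in>A. \<Sum>k\<in>B. f a k v u)"
proof -
  have "(\<Sum>a\<in>A. \<Sum>k\<in>B. \<Sum>v\<in>C. \<Sum>u\<in>D. f a k v u)
      = (\<Sum>v\<in>C. \<Sum>a\<in>A. \<Sum>k\<in>B. \<Sum>u\<in>D. f a k v u)"
    by (subst sum.swap) (simp only: sum.swap[of _ B C])
  also have "\<dots> = (\<Sum>v\<in>C. \<Sum>u\<in>D. \<Sum>a\<in>A. \<Sum>k\<in>B. f a k v u)"
    by (simp only: sum.swap[of _ B D] sum.swap[of _ A D])
  finally show ?thesis .
qed

lemma pbracket_H:
  assumes mono: "\<forall>a b. 1 \<le> a \<longrightarrow> a < b \<longrightarrow> b \<le> 2 * K \<longrightarrow> x a < x b"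
  shows "pbracket (2 * K) (H K m i) (H K m j) x =
    (\<Sum>v\<in>alternating (2 * K) i. \<Sum>u\<in>alternating (2 * K) j.
      weight (2 * K) m v x * weight (2 * K) m u x * sign_form (2 * K) v u)"
proof -
  let ?n = "2 * K"
  let ?w = "\<lambda>v. weight ?n m v x"
  have sgn_x: "sgn (x a - x k) = sgn (int a - int k)" if "a \<in> {1..?n}" "k \<in> {1..?n}" for a k
    using mono that by (cases a k rule: linorder_cases) auto
  have "pbracket ?n (H K m i) (H K m j) x =
      (\<Sum>a\<in>{1..?n}. \<Sum>k\<in>{1..?n}. \<Sum>v\<in>alternating ?n i. \<Sum>u\<in>alternating ?n j.
        sgn (int a - int k) * (?w v * v a) * (?w u * u k))"
    unfolding pbracket_def partial_H
    by (intro sum.cong refl) (simp add: sgn_x sum_distrib_left sum_distrib_right mult_ac)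
  also have "\<dots> = (\<Sum>v\<in>alternating ?n i. \<Sum>u\<in>alternating ?n j. \<Sum>a\<in>{1..?n}. \<Sum>k\<in>{1..?n}.
        sgn (int a - int k) * (?w v * v a) * (?w u * u k))"
    by (rule sum_swap_nested)
  also have "\<dots> = (\<Sum>v\<in>alternating ?n i. \<Sum>u\<in>alternating ?n j. ?w v * ?w u * sign_form ?n v u)"
    unfolding sign_form_def by (simp add: sum_distrib_left mult_ac)
  finally show ?thesis .
qed

lemma psum_eq_sum_support:
  assumes "\<forall>b. v b \<noteq> 0 \<longrightarrow> 1 \<le> b \<and> b \<le> n"
  shows "psum v c = (\<Sum>a\<in>{1..n}. if a \<le> c then v a else 0)"
proof -
  have "psum v c = (\<Sum>a\<in>{..c}. if a \<in> {1..n} then v a else 0)"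
    unfolding psum_def using assms by (intro sum.cong) auto
  also have "\<dots> = sum v ({1..n} \<inter> {..c})"
    using sum.inter_restrict[of "{..c}" v "{1..n}"] by (simp add: Int_commute)
  also have "\<dots> = (\<Sum>a\<in>{1..n}. if a \<le> c then v a else 0)"
    using sum.inter_restrict[of "{1..n}" v "{..c}"] by simp
  finally show ?thesis .
qed

lemma sum_sgn_times_eq_psum:
  assumes supp: "\<forall>b. v b \<noteq> 0 \<longrightarrow> 1 \<le> b \<and> b \<le> n" and last: "psum v n = 0" and "1 \<le> k"
  shows "(\<Sum>a\<in>{1..n}. sgn (int a - int k) * v a) = - (psum v (k - 1) + psum v k)"
proof -
  have "(\<Sum>a\<in>{1..n}. sgn (int a - int k) * v a)
      = (\<Sum>a\<in>{1..n}. (v a - (if a \<le> k then v a else 0)) - (if a \<le> k - 1 then v a else 0))"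
    using \<open>1 \<le> k\<close> by (intro sum.cong refl) (auto simp: sgn_if)
  also have "\<dots> = (psum v n - psum v k) - psum v (k - 1)"
    using psum_eq_sum_support[OF supp] by (simp add: sum_subtractf)
  finally show ?thesis using last by simp
qed

lemma sign_form_eq_sum_psum:
  assumes "\<forall>b. v b \<noteq> 0 \<longrightarrow> 1 \<le> b \<and> b \<le> n" and "psum v n = 0"
  shows "sign_form n v u = - (\<Sum>k\<in>{1..n}. u k * (psum v (k - 1) + psum v k))"
proof -
  have "sign_form n v u = (\<Sum>k\<in>{1..n}. u k * (\<Sum>a\<in>{1..n}. sgn (int a - int k) * v a))"
    unfolding sign_form_def by (subst sum.swap) (simp add: sum_distrib_left mult_ac)
  also have "\<dots> = (\<Sum>k\<in>{1..n}. u k * - (psum v (k - 1) + psum v k))"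
    using sum_sgn_times_eq_psum[OF assms] by (intro sum.cong) auto
  finally show ?thesis by (simp add: sum_negf[symmetric] algebra_simps)
qed

lemma sign_form_antisym: "sign_form n v u = - sign_form n u v"
proof -
  have "sgn (int a - int k) * v a * u k = - (sgn (int k - int a) * u k * v a)" for a k
    by (simp add: sgn_if)
  then show ?thesis unfolding sign_form_def
    by (subst sum.swap) (simp only: sum_negf)
qed

text \<open>Telescoping: v_b (P_{b-1} + P_b) = P_b^2 - P_{b-1}^2 for the partial sums P of v.\<close>
lemma sum_times_psum_eq_0:
  assumes "\<forall>b. v b \<noteq> 0 \<longrightarrow> 1 \<le> b \<and> b \<le> n" and "psum v n = 0"
  shows "(\<Sum>b\<in>{1..n}. v b * (psum v (b - 1) + psum v b)) = 0"
proof -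
  have "(\<Sum>b\<in>{1..n}. v b * (psum v (b - 1) + psum v b))
      = (\<Sum>b\<in>{1..n}. (psum v b)^2 - (psum v (b - 1))^2)"
    by (intro sum.cong refl) (simp add: psum_diff[of _ v] power2_eq_square algebra_simps)
  also have "\<dots> = (psum v n)^2 - (psum v 0)^2"
    by (induction n) (auto simp: sum.cl_ivl_Suc)
  moreover have "v 0 = 0" using assms(1) by (metis not_one_le_zero)
  ultimately show ?thesis using assms(2) psum_0[of v] by simp
qed

definition step_term :: "(nat \<Rightarrow> int) \<Rightarrow> (nat \<Rightarrow> int) \<Rightarrow> nat \<Rightarrow> int" where
  "step_term v u b = (psum v (b - 1) + psum u (b - 1) + psum v b + psum u b - 2) * (v b - u b)"

text \<open>The shift by 2 in step_term adds only telescoping terms, but makes step_term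
  vanish wherever one of the partial sums is 0 and the other 1.\<close>
lemma sign_form_eq_sum_step_term:
  assumes sv: "\<forall>b. v b \<noteq> 0 \<longrightarrow> 1 \<le> b \<and> b \<le> n" and pv: "psum v n = 0"
    and su: "\<forall>b. u b \<noteq> 0 \<longrightarrow> 1 \<le> b \<and> b \<le> n" and pu: "psum u n = 0"
  shows "2 * sign_form n v u = (\<Sum>b\<in>{1..n}. step_term v u b)"
proof -
  have total: "(\<Sum>b\<in>{1..n}. w b) = 0"
    if "\<forall>b. w b \<noteq> 0 \<longrightarrow> 1 \<le> b \<and> b \<le> n" "psum w n = 0" for w
    using psum_eq_sum_support[OF that(1), of n] that(2) by simp
  have "(\<Sum>b\<in>{1..n}. step_term v u b)
      = (\<Sum>b\<in>{1..n}. v b * (psum v (b - 1) + psum v b)) - (\<Sum>b\<in>{1..n}. u b * (psum v (b - 1) + psum v b))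
        + (\<Sum>b\<in>{1..n}. v b * (psum u (b - 1) + psum u b)) - (\<Sum>b\<in>{1..n}. u b * (psum u (b - 1) + psum u b))
        - 2 * (\<Sum>b\<in>{1..n}. v b) + 2 * (\<Sum>b\<in>{1..n}. u b)"
    unfolding step_term_def by (simp add: sum_subtractf sum.distrib sum_distrib_left algebra_simps)
  also have "\<dots> = 2 * sign_form n v u"
    using sum_times_psum_eq_0[OF sv pv] sum_times_psum_eq_0[OF su pu] total[OF sv pv] total[OF su pu]
      sign_form_eq_sum_psum[OF sv pv, of u] sign_form_eq_sum_psum[OF su pu, of v]
      sign_form_antisym[of n v u] by simp
  finally show ?thesis by simp
qed

section \<open>Decomposition into blocks\<close>

lemma sum_split_atLeastAtMost:
  fixes c d n :: nat
  assumes "c \<le> Suc d" "d \<le> n"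
  shows "sum f {c..n} = sum f {c..d} + sum f {Suc d..n}"
  using sum.ub_add_nat[of c d f "n - d"] assms by simp

definition next_meet :: "(nat \<Rightarrow> int) \<Rightarrow> (nat \<Rightarrow> int) \<Rightarrow> nat \<Rightarrow> nat" where
  "next_meet v u c = (LEAST d. c \<le> d \<and> psum v d = psum u d)"

lemma next_meet:
  assumes "c \<le> n" "psum v n = psum u n"
  shows next_meet_ge: "c \<le> next_meet v u c"
    and next_meet_le: "next_meet v u c \<le> n"
    and psum_next_meet: "psum v (next_meet v u c) = psum u (next_meet v u c)"
    and psum_before_next_meet: "c \<le> a \<Longrightarrow> a < next_meet v u c \<Longrightarrow> psum v a \<noteq> psum u a"
proof -
  have ex: "c \<le> n \<and> psum v n = psum u n" using assms by simp
  show "c \<le> next_meet v u c" "psum v (next_meet v u c) = psum u (next_meet v u c)"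
    unfolding next_meet_def using LeastI[of "\<lambda>d. c \<le> d \<and> psum v d = psum u d", OF ex] by auto
  show "next_meet v u c \<le> n" unfolding next_meet_def by (rule Least_le) (rule ex)
  show "c \<le> a \<Longrightarrow> a < next_meet v u c \<Longrightarrow> psum v a \<noteq> psum u a"
    unfolding next_meet_def using not_less_Least by blast
qed

text \<open>The indices where the partial sums of v and u agree cut {1..n} into blocks;
  block_term v u c is the contribution of the block starting at c, and it is 0
  unless a block starts at c.\<close>
definition block_term :: "(nat \<Rightarrow> int) \<Rightarrow> (nat \<Rightarrow> int) \<Rightarrow> nat \<Rightarrow> int" where
  "block_term v u c = (if psum v (c - 1) = psum u (c - 1)
      then (\<Sum>b\<in>{c..next_meet v u c}. step_term v u b) else 0)"

lemma sum_step_term_eq_sum_block_term: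
  assumes last: "psum v n = psum u n" and first: "v 0 = u 0"
  shows "(\<Sum>b\<in>{1..n}. step_term v u b) = (\<Sum>c\<in>{1..n}. block_term v u c)"
proof -
  have "1 \<le> c \<Longrightarrow> c \<le> n + 1 \<Longrightarrow> psum v (c - 1) = psum u (c - 1) \<Longrightarrow>
      (\<Sum>b\<in>{c..n}. step_term v u b) = (\<Sum>c'\<in>{c..n}. block_term v u c')" for c
  proof (induction "n + 1 - c" arbitrary: c rule: less_induct)
    case less
    show ?case
    proof (cases "c = n + 1")
      case True
      then show ?thesis by simp
    next
      case False
      then have "c \<le> n" using less.prems by simp
      define d where "d = next_meet v u c"
      have cd: "c \<le> d" and dn: "d \<le> n" and meet: "psum v d = psum u d"
        and apart: "\<And>a. c \<le> a \<Longrightarrow> a < d \<Longrightarrow> psum v a \<noteq> psum u a"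
        using next_meet[OF \<open>c \<le> n\<close> last] unfolding d_def by auto
      have "(\<Sum>c'\<in>{Suc c..d}. block_term v u c') = 0"
        using apart unfolding block_term_def by (intro sum.neutral) force
      moreover have "block_term v u c = (\<Sum>b\<in>{c..d}. step_term v u b)"
        using less.prems unfolding block_term_def d_def by simp
      ultimately have "(\<Sum>c'\<in>{c..d}. block_term v u c') = (\<Sum>b\<in>{c..d}. step_term v u b)"
        using sum_split_atLeastAtMost[of c c d "block_term v u"] cd by simp
      moreover have "(\<Sum>b\<in>{Suc d..n}. step_term v u b) = (\<Sum>c'\<in>{Suc d..n}. block_term v u c')"
        using less.hyps[of "Suc d"] cd dn meet by simp
      ultimately show ?thesis
        using sum_split_atLeastAtMost[of c d n "step_term v u"]
          sum_split_atLeastAtMost[of c d n "block_term v u"] cd dn by simp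
    qed
  qed
  then show ?thesis using first psum_0[of v] psum_0[of u] by simp
qed

definition swap_block :: "nat \<Rightarrow> nat \<Rightarrow> (nat \<Rightarrow> int) \<Rightarrow> (nat \<Rightarrow> int) \<Rightarrow> nat \<Rightarrow> int" where
  "swap_block c d v u = (\<lambda>b. if c \<le> b \<and> b \<le> d then u b else v b)"

lemma swap_block_swap_block: "swap_block c d (swap_block c d v u) (swap_block c d u v) = v"
  unfolding swap_block_def by auto

lemma psum_swap_block:
  assumes "1 \<le> c" "c \<le> d" "psum v (c - 1) = psum u (c - 1)" "psum v d = psum u d"
  shows "psum (swap_block c d v u) a = (if c \<le> a \<and> a \<le> d then psum u a else psum v a)"
proof (induction a)
  case 0
  then show ?case using assms(1) unfolding swap_block_def by (simp add: psum_0)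
next
  case (Suc a)
  consider "Suc a < c" | "Suc a = c" | "c < Suc a \<and> Suc a \<le> d" | "a = d" | "d < a" by linarith
  then show ?case
  proof cases
    case 2
    then have "a = c - 1" by simp
    have "psum (swap_block c d v u) (Suc a)
        = psum (swap_block c d v u) a + swap_block c d v u (Suc a)"
      by (rule psum_Suc)
    also have "\<dots> = psum v a + u (Suc a)"
      using Suc 2 assms(2) by (simp add: swap_block_def)
    also have "\<dots> = psum u (Suc a)"
      using assms(3) psum_Suc[of u a] \<open>a = c - 1\<close> by simp
    finally show ?thesis using 2 assms(2) by simp
  qed (use Suc assms in \<open>auto simp: swap_block_def psum_Suc\<close>)
qed

lemma weight_swap_block:
  "weight n m (swap_block c d v u) x * weight n m (swap_block c d u v) x
    = weight n m v x * weight n m u x"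
proof -
  have "mass n m (swap_block c d v u) * mass n m (swap_block c d u v) = mass n m v * mass n m u"
    unfolding mass_def prod.distrib[symmetric] by (intro prod.cong refl) (auto simp: swap_block_def)
  moreover have "exponent n (swap_block c d v u) x + exponent n (swap_block c d u v) x
      = exponent n v x + exponent n u x"
    unfolding exponent_def sum.distrib[symmetric]
    by (intro sum.cong refl) (auto simp: swap_block_def algebra_simps)
  ultimately show ?thesis
    unfolding weight_def by (metis (no_types, lifting) exp_add mult.assoc mult.left_commute)
qed

text \<open>Swapping v and u on a block preserves the sums of their partial sums and the
  block itself, but reverses the sign of v_b - u_b and hence of every step term.\<close>
lemma swap_block_reverses_block_term:
  assumes "1 \<le> c" "c \<le> n" and last: "psum v n = psum u n"
    and first: "psum v (c - 1) = psum u (c - 1)"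
  defines "d \<equiv> next_meet v u c"
  shows psum_swap_block_first: "psum (swap_block c d v u) (c - 1) = psum (swap_block c d u v) (c - 1)"
    and next_meet_swap_block: "next_meet (swap_block c d v u) (swap_block c d u v) c = d"
    and block_term_swap_block: "block_term (swap_block c d v u) (swap_block c d u v) c
      = - block_term v u c"
proof -
  let ?v = "swap_block c d v u" and ?u = "swap_block c d u v"
  have cd: "c \<le> d" and meet: "psum v d = psum u d"
    using next_meet[OF \<open>c \<le> n\<close> last] unfolding d_def by auto
  have psum_v: "psum ?v a = (if c \<le> a \<and> a \<le> d then psum u a else psum v a)" for a
    using psum_swap_block[OF \<open>1 \<le> c\<close> cd first meet] .
  have psum_u: "psum ?u a = (if c \<le> a \<and> a \<le> d then psum v a else psum u a)" for a
    using psum_swap_block[OF \<open>1 \<le> c\<close> cd first[symmetric] meet[symmetric]] .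
  have meet_iff: "psum ?v a = psum ?u a \<longleftrightarrow> psum v a = psum u a" for a
    using psum_v[of a] psum_u[of a] by auto
  show first': "psum ?v (c - 1) = psum ?u (c - 1)" using meet_iff first by simp
  show next_meet': "next_meet ?v ?u c = d"
    unfolding next_meet_def meet_iff by (simp add: d_def next_meet_def)
  have "step_term ?v ?u b = - step_term v u b" if "b \<in> {c..d}" for b
  proof -
    have "psum ?v a + psum ?u a = psum v a + psum u a" for a
      using psum_v[of a] psum_u[of a] by auto
    moreover have "?v b - ?u b = - (v b - u b)" using that unfolding swap_block_def by auto
    ultimately show ?thesis unfolding step_term_def by (metis add.assoc mult_minus_right)
  qed
  then show "block_term ?v ?u c = - block_term v u c"
    unfolding block_term_def next_meet' d_def[symmetric] using first first'
    by (simp add: sum_negf)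
qed

section \<open>Cancellation of the block terms\<close>

lemma sum_atLeastAtMost_endpoints:
  fixes c d :: nat and f :: "nat \<Rightarrow> 'a::comm_monoid_add"
  assumes "c < d" "\<And>b. c < b \<Longrightarrow> b < d \<Longrightarrow> f b = 0"
  shows "sum f {c..d} = f c + f d"
proof -
  have "sum f {c..d} = sum f {c, d}"
    using assms by (intro sum.mono_neutral_right) (auto simp: order.order_iff_strict)
  then show ?thesis using assms(1) by simp
qed

text \<open>Read e, (p, p'), (q, q') and f as the partial sums of (v, u) at c - 1, c, d - 1 and d:
  a block whose two end step terms do not cancel is entered by one of the two sequences
  and left by the other.\<close>
lemma block_ends_balance:
  fixes e p q f p' q' :: int
  assumes "e \<in> {0, 1}" "p \<in> {0, 1}" "q \<in> {0, 1}" "f \<in> {0, 1}" "p' \<in> {0, 1}" "q' \<in> {0, 1}"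
    "p + p' = 1" "q + q' = 1"
    "(2 * e + p + p' - 2) * ((p - e) - (p' - e)) + (q + q' + 2 * f - 2) * ((f - q) - (f - q')) \<noteq> 0"
  shows "((p' - e)^2 - (p - e)^2) + ((f - q')^2 - (f - q)^2) = 0"
  using assms by auto

lemma alternating_psum_last_eq:
  "v \<in> alternating n i \<Longrightarrow> u \<in> alternating n j \<Longrightarrow> psum v n = psum u n"
  using alternating_psum_last by metis

lemma psum_add_eq_1_before_next_meet:
  assumes v: "v \<in> alternating n i" and u: "u \<in> alternating n j" and "c \<le> n"
    and "c \<le> a" "a < next_meet v u c"
  shows "psum v a + psum u a = 1"
  using psum_before_next_meet[OF \<open>c \<le> n\<close> alternating_psum_last_eq[OF v u] assms(4,5)]
    alternating_psum[OF v, of a] alternating_psum[OF u, of a] by auto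

lemma block_structure:
  assumes v: "v \<in> alternating n i" and u: "u \<in> alternating n j" and "1 \<le> c" "c \<le> n"
    and first: "psum v (c - 1) = psum u (c - 1)" and nonzero: "block_term v u c \<noteq> 0"
  defines "d \<equiv> next_meet v u c"
  shows block_nontrivial: "c < d"
    and block_interior: "c < b \<Longrightarrow> b < d \<Longrightarrow> step_term v u b = 0 \<and> u b = - v b"
proof -
  have cd: "c \<le> d" and meet: "psum v d = psum u d"
    using next_meet[OF \<open>c \<le> n\<close> alternating_psum_last_eq[OF v u]] unfolding d_def by auto
  show "c < d"
  proof (rule ccontr)
    assume "\<not> c < d"
    then have "d = c" using cd by simp
    then have "v c = u c" using psum_diff[OF \<open>1 \<le> c\<close>] first meet by metis
    then show False using nonzero first \<open>d = c\<close> by (simp add: block_term_def d_def step_term_def)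
  qed
  assume "c < b" "b < d"
  then have "psum v (b - 1) + psum u (b - 1) = 1" "psum v b + psum u b = 1"
    using psum_add_eq_1_before_next_meet[OF v u \<open>c \<le> n\<close>] unfolding d_def by auto
  moreover have "v b + u b = 0"
    using psum_diff[of b v] psum_diff[of b u] \<open>c < b\<close> calculation by simp
  ultimately show "step_term v u b = 0 \<and> u b = - v b" unfolding step_term_def by simp
qed

lemma block_ends:
  assumes v: "v \<in> alternating n i" and u: "u \<in> alternating n j" and "1 \<le> c" "c \<le> n"
    and first: "psum v (c - 1) = psum u (c - 1)" and nonzero: "block_term v u c \<noteq> 0"
  defines "d \<equiv> next_meet v u c"
  shows "(u c)^2 + (u d)^2 = (v c)^2 + (v d)^2"
proof -
  note block = block_structure[OF assms(1-6), folded d_def]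
  have meet: "psum v d = psum u d"
    using psum_next_meet[OF \<open>c \<le> n\<close> alternating_psum_last_eq[OF v u]] unfolding d_def .
  define e p p' q q' f where "e = psum v (c - 1)" and "p = psum v c" and "p' = psum u c"
    and "q = psum v (d - 1)" and "q' = psum u (d - 1)" and "f = psum v d"
  have ends: "v c = p - e" "u c = p' - e" "v d = f - q" "u d = f - q'"
    unfolding e_def p_def p'_def q_def q'_def f_def
    using psum_diff[of c v] psum_diff[of c u] psum_diff[of d v] psum_diff[of d u]
      \<open>1 \<le> c\<close> block(1) first meet by auto
  have "block_term v u c = (\<Sum>b\<in>{c..d}. step_term v u b)"
    unfolding block_term_def d_def using first by simp
  then have "step_term v u c + step_term v u d \<noteq> 0"
    using nonzero sum_atLeastAtMost_endpoints[OF block(1), of "step_term v u"] block(2) by simp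
  then have "(2 * e + p + p' - 2) * ((p - e) - (p' - e)) + (q + q' + 2 * f - 2) * ((f - q) - (f - q')) \<noteq> 0"
    using ends first meet unfolding step_term_def e_def p_def p'_def q_def q'_def f_def
    by (simp add: algebra_simps)
  moreover have "p + p' = 1" "q + q' = 1"
    using psum_add_eq_1_before_next_meet[OF v u \<open>c \<le> n\<close>] block(1)
    unfolding p_def p'_def q_def q'_def d_def by auto
  moreover have "e \<in> {0, 1}" "p \<in> {0, 1}" "q \<in> {0, 1}" "f \<in> {0, 1}" "p' \<in> {0, 1}" "q' \<in> {0, 1}"
    using alternating_psum[OF v] alternating_psum[OF u]
    unfolding e_def p_def p'_def q_def q'_def f_def by auto
  ultimately have "((p' - e)^2 - (p - e)^2) + ((f - q')^2 - (f - q)^2) = 0"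
    by (intro block_ends_balance)
  then show ?thesis unfolding ends by simp
qed

lemma sum_atLeastAtMost_eq_psum_diff:
  assumes "1 \<le> c" "c \<le> Suc d"
  shows "sum w {c..d} = psum w d - psum w (c - 1)"
  using sum.ub_add_nat[of 0 "c - 1" w "d - (c - 1)"] assms
  by (simp add: psum_def atLeast0AtMost)

lemma card_ones_swap_block:
  fixes v u :: "nat \<Rightarrow> int"
  assumes "1 \<le> c" "d \<le> n"
    and balance: "(\<Sum>b\<in>{c..d}. (if u b = 1 then 1 else 0) - (if v b = 1 then 1 else 0) :: int) = 0"
  shows "card {b\<in>{1..n}. swap_block c d v u b = 1} = card {b\<in>{1..n}. v b = 1}"
proof -
  have card_ones: "int (card {b\<in>{1..n}. w b = 1}) = (\<Sum>b\<in>{1..n}. if w b = 1 then 1 else 0)"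
    for w :: "nat \<Rightarrow> int"
    using sum.inter_filter[of "{1..n}" "\<lambda>_. 1::int" "\<lambda>b. w b = 1"] by simp
  have "int (card {b\<in>{1..n}. swap_block c d v u b = 1}) - int (card {b\<in>{1..n}. v b = 1})
      = (\<Sum>b\<in>{1..n}. if b \<in> {c..d} then (if u b = 1 then 1 else 0) - (if v b = 1 then 1 else 0) else 0)"
    unfolding card_ones sum_subtractf[symmetric] by (intro sum.cong) (auto simp: swap_block_def)
  also have "\<dots> = (\<Sum>b\<in>{1..n} \<inter> {c..d}. (if u b = 1 then 1 else 0) - (if v b = 1 then 1 else 0))"
    by (rule sum.inter_restrict[symmetric]) simp
  also have "{1..n} \<inter> {c..d} = {c..d}" using assms(1,2) by auto
  finally show ?thesis using balance by simp
qed

lemma ones_balance_block: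
  assumes v: "v \<in> alternating n i" and u: "u \<in> alternating n j" and "1 \<le> c" "c \<le> n"
    and first: "psum v (c - 1) = psum u (c - 1)" and nonzero: "block_term v u c \<noteq> 0"
  defines "d \<equiv> next_meet v u c"
  shows "(\<Sum>b\<in>{c..d}. (if u b = 1 then 1 else 0) - (if v b = 1 then 1 else 0) :: int) = 0"
proof -
  note block = block_structure[OF assms(1-6), folded d_def]
  have meet: "psum v d = psum u d"
    using psum_next_meet[OF \<open>c \<le> n\<close> alternating_psum_last_eq[OF v u]] unfolding d_def .
  have indicator: "2 * (if y = 1 then 1 else 0) = y^2 + y" if "y \<in> {-1, 0, 1::int}" for y
    using that by auto
  have "2 * (\<Sum>b\<in>{c..d}. (if u b = 1 then 1 else 0) - (if v b = 1 then 1 else 0) :: int)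
      = (\<Sum>b\<in>{c..d}. (u b)^2 - (v b)^2) + (sum u {c..d} - sum v {c..d})"
    unfolding sum_distrib_left sum_subtractf[symmetric] sum.distrib[symmetric]
  proof (intro sum.cong refl)
    fix b
    show "2 * ((if u b = 1 then 1 else 0) - (if v b = 1 then 1 else 0))
        = (u b)^2 - (v b)^2 + (u b - v b)"
      unfolding right_diff_distrib[of 2] indicator[OF alternating_values[OF u, of b]]
        indicator[OF alternating_values[OF v, of b]]
      by simp
  qed
  also have "(\<Sum>b\<in>{c..d}. (u b)^2 - (v b)^2) = 0"
    using sum_atLeastAtMost_endpoints[OF block(1), of "\<lambda>b. (u b)^2 - (v b)^2"] block(2)
      block_ends[OF assms(1-6)] unfolding d_def by simp
  also have "sum u {c..d} - sum v {c..d} = 0"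
    using sum_atLeastAtMost_eq_psum_diff[OF \<open>1 \<le> c\<close>] block(1) first meet by simp
  finally show ?thesis by simp
qed

lemma swap_block_mem_alternating:
  assumes v: "v \<in> alternating n i" and u: "u \<in> alternating n j" and "1 \<le> c" "c \<le> n"
    and first: "psum v (c - 1) = psum u (c - 1)" and nonzero: "block_term v u c \<noteq> 0"
  defines "d \<equiv> next_meet v u c"
  shows "swap_block c d v u \<in> alternating n i" "swap_block c d u v \<in> alternating n j"
proof -
  have cd: "c \<le> d" and dn: "d \<le> n" and meet: "psum v d = psum u d"
    using next_meet[OF \<open>c \<le> n\<close> alternating_psum_last_eq[OF v u]] unfolding d_def by auto
  have balance: "(\<Sum>b\<in>{c..d}. (if u b = 1 then 1 else 0) - (if v b = 1 then 1 else 0) :: int) = 0"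
    using ones_balance_block[OF assms(1-6)] unfolding d_def .
  then have balance': "(\<Sum>b\<in>{c..d}. (if v b = 1 then 1 else 0) - (if u b = 1 then 1 else 0) :: int) = 0"
    by (simp add: sum_subtractf)
  have "swap_block c d v u \<in> alternating n i \<and> swap_block c d u v \<in> alternating n j"
    unfolding alternating_def
    using psum_swap_block[OF \<open>1 \<le> c\<close> cd first meet]
      psum_swap_block[OF \<open>1 \<le> c\<close> cd first[symmetric] meet[symmetric]]
      card_ones_swap_block[OF \<open>1 \<le> c\<close> dn balance]
      card_ones_swap_block[OF \<open>1 \<le> c\<close> dn balance']
      alternatingD[OF v] alternatingD[OF u] dn
    by (auto simp: swap_block_def)
  then show "swap_block c d v u \<in> alternating n i" "swap_block c d u v \<in> alternating n j" by auto
qed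

lemma sum_sign_reversing_involution_eq_0:
  fixes f :: "'a \<Rightarrow> real"
  assumes "\<And>p. p \<in> S \<Longrightarrow> \<phi> p \<in> S" "\<And>p. p \<in> S \<Longrightarrow> \<phi> (\<phi> p) = p"
    "\<And>p. p \<in> S \<Longrightarrow> f (\<phi> p) = - f p"
  shows "sum f S = 0"
proof -
  have "bij_betw \<phi> S S" by (rule bij_betw_byWitness[of S \<phi> \<phi>]) (use assms in auto)
  then have "sum (\<lambda>p. f (\<phi> p)) S = sum f S" by (rule sum.reindex_bij_betw)
  moreover have "sum (\<lambda>p. f (\<phi> p)) S = - sum f S" using assms(3) by (simp add: sum_negf)
  ultimately show ?thesis by simp
qed

text \<open>Swapping a pair (v, u) on the block starting at c is an involution of
  alternating n i \<times> alternating n j that preserves the weights and reverses the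
  block term.\<close>
lemma sum_weight_block_term_eq_0:
  assumes "1 \<le> c" "c \<le> n"
  shows "(\<Sum>(v, u)\<in>alternating n i \<times> alternating n j.
      weight n m v x * weight n m u x * block_term v u c) = 0"
proof -
  let ?S = "alternating n i \<times> alternating n j"
  let ?f = "\<lambda>(v, u). weight n m v x * weight n m u x * block_term v u c"
  let ?swaps = "\<lambda>(v, u). psum v (c - 1) = psum u (c - 1) \<and> block_term v u c \<noteq> 0"
  define \<phi> where "\<phi> = (\<lambda>(v, u). if ?swaps (v, u)
      then (swap_block c (next_meet v u c) v u, swap_block c (next_meet v u c) u v) else (v, u))"
  have swapped: "\<phi> (v, u) \<in> ?S \<and> \<phi> (\<phi> (v, u)) = (v, u) \<and> ?f (\<phi> (v, u)) = - ?f (v, u)"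
    if "(v, u) \<in> ?S" "?swaps (v, u)" for v u
  proof -
    have v: "v \<in> alternating n i" and u: "u \<in> alternating n j" using that(1) by auto
    have first: "psum v (c - 1) = psum u (c - 1)" and nonzero: "block_term v u c \<noteq> 0"
      using that(2) by auto
    note reverses =
      swap_block_reverses_block_term[OF assms alternating_psum_last_eq[OF v u] first]
    have "?swaps (\<phi> (v, u))" using that(2) reverses unfolding \<phi>_def by simp
    then have "\<phi> (\<phi> (v, u)) = (v, u)"
      using that(2) reverses(2) unfolding \<phi>_def by (simp add: swap_block_swap_block)
    then show ?thesis
      using swap_block_mem_alternating[OF v u assms first nonzero] that(2) reverses(3)
        weight_swap_block[of n m c "next_meet v u c" v u x]
      unfolding \<phi>_def by simp
  qed
  show ?thesis
  proof (rule sum_sign_reversing_involution_eq_0[where \<phi> = \<phi>])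
    fix p assume "p \<in> ?S"
    moreover obtain v u where p: "p = (v, u)" by fastforce
    moreover have "?f p = 0" if "\<not> ?swaps p" using that unfolding p block_term_def by auto
    ultimately show "\<phi> p \<in> ?S" "\<phi> (\<phi> p) = p" "?f (\<phi> p) = - ?f p"
      using swapped[of v u] unfolding \<phi>_def by (auto split: if_splits)
  qed
qed

lemma sum_weight_sign_form_eq_0:
  "(\<Sum>v\<in>alternating n i. \<Sum>u\<in>alternating n j. weight n m v x * weight n m u x * sign_form n v u) = 0"
proof -
  have pair: "weight n m v x * weight n m u x * sign_form n v u
      = (\<Sum>c\<in>{1..n}. weight n m v x * weight n m u x * block_term v u c) / 2"
    if v: "v \<in> alternating n i" and u: "u \<in> alternating n j" for v u
  proof -
    have "v 0 = 0" "u 0 = 0"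
      using alternating_support[OF v, of 0] alternating_support[OF u, of 0] by force+
    then have first: "v 0 = u 0" by simp
    have supp: "\<forall>b. v b \<noteq> 0 \<longrightarrow> 1 \<le> b \<and> b \<le> n"
        "\<forall>b. u b \<noteq> 0 \<longrightarrow> 1 \<le> b \<and> b \<le> n"
      using alternating_support[OF v] alternating_support[OF u] by blast+
    note last = alternating_psum_last[OF v] alternating_psum_last[OF u]
    have "2 * sign_form n v u = (\<Sum>c\<in>{1..n}. block_term v u c)"
      using sign_form_eq_sum_step_term[OF supp(1) last(1) supp(2) last(2)]
        sum_step_term_eq_sum_block_term[of v n u, OF _ first] last by simp
    then have "real_of_int (sign_form n v u) = (\<Sum>c\<in>{1..n}. real_of_int (block_term v u c)) / 2"
      by (metis (mono_tags) of_int_sum of_int_mult of_int_numeral nonzero_mult_div_cancel_left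
          zero_neq_numeral)
    then show ?thesis by (simp flip: sum_distrib_left)
  qed
  have "(\<Sum>v\<in>alternating n i. \<Sum>u\<in>alternating n j. weight n m v x * weight n m u x * sign_form n v u)
      = (\<Sum>v\<in>alternating n i. \<Sum>u\<in>alternating n j.
          (\<Sum>c\<in>{1..n}. weight n m v x * weight n m u x * block_term v u c) / 2)"
    using pair by (intro sum.cong refl)
  also have "\<dots> = (\<Sum>(v, u)\<in>alternating n i \<times> alternating n j.
          (\<Sum>c\<in>{1..n}. weight n m v x * weight n m u x * block_term v u c) / 2)"
    by (rule sum.cartesian_product)
  also have "\<dots> = (\<Sum>c\<in>{1..n}. (\<Sum>(v, u)\<in>alternating n i \<times> alternating n j.
      weight n m v x * weight n m u x * block_term v u c)) / 2"
    by (simp add: sum_divide_distrib case_prod_unfold) (rule sum.swap)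
  also have "\<dots> = 0" using sum_weight_block_term_eq_0 by simp
  finally show ?thesis .
qed

theorem theorem4:
  fixes K :: nat and m :: "nat \<Rightarrow> real" and x :: "nat \<Rightarrow> real" and i j :: nat
  assumes "\<forall>l\<in>{1..2 * K}. m l > 0"
    and "\<forall>a b. 1 \<le> a \<longrightarrow> a < b \<longrightarrow> b \<le> 2 * K \<longrightarrow> x a < x b"
    and "1 \<le> i" "i \<le> K" "1 \<le> j" "j \<le> K"
  shows "pbracket (2 * K) (H K m i) (H K m j) x = 0"
  using pbracket_H[OF assms(2)] sum_weight_sign_form_eq_0 by simp

end
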